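(* Let $n\ge 3$ and let $l_1=l_2=\dots=l_n=l_\infty$. Then the element $(s_{1,n}s_{1,n-1})^{n(n+1)}\in J_n$ acts as the identity on $X(l_1,\dots,l_n,l_\infty)$.
   Context: Cactus group: $J_n$ is the group generated by $s_{p,q}$, $1\le p<q\le n$, subject to the relations $s_{p,q}^2=e$; $s_{p,q}s_{p',q'}=s_{p',q'}s_{p,q}$ if $[p,q]$ and $[p',q']$ are disjoint; $s_{p,q}s_{p',q'}s_{p,q}=s_{p+q-q',p+q-p'}$ if $p\le p'<q'\le q$. Arc diagrams: fix nonnegative integers $l_1,\dots,l_n,l_\infty$. On the boundary circle of a closed disc place $n+1$ marked positions: position $0$ (occupied by $z_\infty$) and positions $1,\dots,n$ following it clockwise. An arc diagram is a bijective assignment of labels $z_1,\dots,z_n$ to positions $1,\dots,n$ together with a finite collection of simple arcs in the disc, pairwise disjoint except at endpoints, each joining two distinct marked points, such that $z_j$ is an endpoint of exactly $l_j$ arcs ($j\in\{1,\dots,n,\infty\}$; $l_j$ is the valence). Parallel arcs are allowed; diagrams are up to isotopy, equivalently determined by the labelling and the number of arcs between each pair of marked points. $X(l_1,\dots,l_n,l_\infty)$ is the set of such diagrams. Action: $s_{p,q}$ ($1\le p<q\le n$) acts by cutting off positions $p,\dots,q$ with a chord $\ell$ (arcs isotoped to cross $\ell$ at most once), reflecting that region by the reflection reversing $\ell$ (label at position $p+t$ goes to position $q-t$, crossing points on $\ell$ reversed), leaving the rest unchanged and reconnecting arcs at $\ell$. Words act right to left; this is an action of $J_n$. *)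

theory Defs
  imports Main
begin

text \<open>
Marked positions on the boundary circle are 0,1,...,n in clockwise
(cyclic) order; position 0 carries z_infinity.  A diagram is a pair (sigma, A):
  sigma k = j  means that label z_j sits at position k (1 <= k <= n);
  A i j     = number of arcs between positions i and j (0 <= i,j <= n).
Arcs are determined up to isotopy by these multiplicities; pairwise disjointness
(except at endpoints) means no two chords with positive multiplicity interleave.
\<close>

type_synonym arc_diagram = "(nat \<Rightarrow> nat) \<times> (nat \<Rightarrow> nat \<Rightarrow> nat)"

definition is_arc_diagram :: "nat \<Rightarrow> (nat \<Rightarrow> nat) \<Rightarrow> nat \<Rightarrow> arc_diagram \<Rightarrow> bool" where
  "is_arc_diagram n l linf D \<longleftrightarrow>
     (let \<sigma> = fst D; A = snd D in
       bij_betw \<sigma> {1..n} {1..n}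
     \<and> (\<forall>k. k \<notin> {1..n} \<longrightarrow> \<sigma> k = 0)
     \<and> (\<forall>i j. A i j = A j i)
     \<and> (\<forall>i. A i i = 0)
     \<and> (\<forall>i j. 0 < A i j \<longrightarrow> i \<le> n \<and> j \<le> n)
     \<and> (\<forall>a b c d. a < c \<and> c < b \<and> b < d \<and> 0 < A a b \<longrightarrow> A c d = 0)
     \<and> (\<forall>k\<in>{1..n}. (\<Sum>j\<le>n. A k j) = l (\<sigma> k))
     \<and> (\<Sum>j\<le>n. A 0 j) = linf)"

definition arc_diagrams :: "nat \<Rightarrow> (nat \<Rightarrow> nat) \<Rightarrow> nat \<Rightarrow> arc_diagram set" where
  "arc_diagrams n l linf = {D. is_arc_diagram n l linf D}"

text \<open>The chord ell runs from the boundary point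
between positions p-1 and p to the one between q and q+1.  Arcs crossing ell are
listed in their order along ell starting from the p-side: by inside endpoint
ascending, and for a fixed inside endpoint by outside endpoint in the order
p-1, ..., 0, n, ..., q+1.\<close>

definition in_cut :: "nat \<Rightarrow> nat \<Rightarrow> nat \<Rightarrow> bool" where
  "in_cut p q i \<longleftrightarrow> p \<le> i \<and> i \<le> q"

definition refl_pos :: "nat \<Rightarrow> nat \<Rightarrow> nat \<Rightarrow> nat" where
  "refl_pos p q i = (if in_cut p q i then p + q - i else i)"

definition outside_order :: "nat \<Rightarrow> nat \<Rightarrow> nat \<Rightarrow> nat list" where
  "outside_order n p q = rev [0..<p] @ rev [Suc q..<Suc n]"

definition crossing_list :: "nat \<Rightarrow> nat \<Rightarrow> nat \<Rightarrow> (nat \<Rightarrow> nat \<Rightarrow> nat) \<Rightarrow> (nat \<times> nat) list" where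
  "crossing_list n p q A =
     concat (map (\<lambda>i. concat (map (\<lambda>j. replicate (A i j) (i, j)) (outside_order n p q)))
                 [p..<Suc q])"

text \<open>After reflecting the cut-off region, the outside half at the k-th crossing point
is reconnected with the (reflected) inside half that was at crossing point m+1-k.
Entries are (outside endpoint, new inside endpoint).\<close>
definition new_crossings :: "nat \<Rightarrow> nat \<Rightarrow> nat \<Rightarrow> (nat \<Rightarrow> nat \<Rightarrow> nat) \<Rightarrow> (nat \<times> nat) list" where
  "new_crossings n p q A =
     (let L = crossing_list n p q A in
        zip (map snd L) (map (\<lambda>x. p + q - fst x) (rev L)))"

definition cactus_act :: "nat \<Rightarrow> nat \<Rightarrow> nat \<Rightarrow> arc_diagram \<Rightarrow> arc_diagram" where
  "cactus_act n p q D =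
     (let \<sigma> = fst D; A = snd D; NC = new_crossings n p q A in
       (\<lambda>k. \<sigma> (refl_pos p q k),
        \<lambda>i j. if in_cut p q i \<and> in_cut p q j then A (refl_pos p q i) (refl_pos p q j)
              else if \<not> in_cut p q i \<and> \<not> in_cut p q j then A i j
              else if in_cut p q i then count_list NC (j, i)
              else count_list NC (i, j)))"

end

theory Submission
  imports Defs
begin

text \<open>
The two reflections s_{1,n-1} and s_{1,n} compose to a rotation: the arcs are turned
one step around all n+1 marked points, the labels one step around the positions 1..n,
and z_infinity stays at position 0.  Equal valences are needed only for s_{1,n-1},
whose chord is crossed by arcs ending outside at 0 and at n: they are reconnected as
a rotation requires because, 0 and n having the same valence, equally many of them run
to each of the two points.  The arc rotation has order n+1 and the label rotation
order n, so the n(n+1)-th power acts trivially.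
\<close>

lemma concat_map_append_sorted:
  assumes "sorted_wrt (<) xs"
    and "\<And>x y. x \<in> set xs \<Longrightarrow> y \<in> set xs \<Longrightarrow> x < y \<Longrightarrow> f y = [] \<or> g x = []"
  shows "concat (map (\<lambda>i. f i @ g i) xs) = concat (map f xs) @ concat (map g xs)"
  using assms
proof (induction xs)
  case Nil
  then show ?case by simp
next
  case (Cons x xs)
  then consider "g x = []" | "concat (map f xs) = []"
    by (auto simp: concat_eq_Nil_conv)
  then have "g x @ concat (map f xs) = concat (map f xs) @ g x"
    by (metis append.right_neutral append_Nil)
  with Cons show ?case by simp
qed

lemma length_concat_map_replicate:
  "length (concat (map (\<lambda>i. replicate (f i) (i, c)) xs)) = sum_list (map f xs)"
  by (induction xs) auto

lemma map_snd_concat_map_replicate: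
  "map snd (concat (map (\<lambda>i. replicate (f i) (i, c)) xs)) = replicate (sum_list (map f xs)) c"
  by (induction xs) (auto simp: replicate_add)

lemma count_list_replicate: "count_list (replicate n x) y = (if x = y then n else 0)"
  by (induction n) auto

lemma count_list_map_concat_map_replicate:
  "count_list (map h (concat (map (\<lambda>i. replicate (f i) (i, c)) xs))) y
   = sum_list (map (\<lambda>i. if h (i, c) = y then f i else 0) xs)"
  by (induction xs) (auto simp: count_list_replicate)

lemma count_list_map_Pair:
  "count_list (map (Pair c) ys) (c', y) = (if c = c' then count_list ys y else 0)"
  by (induction ys) auto

lemma sum_list_reflected_delta:
  fixes f :: "nat \<Rightarrow> 'a::comm_monoid_add"
  shows "sum_list (map (\<lambda>i. if c - i = y then f i else 0) [1..<c])
         = (if 1 \<le> y \<and> y < c then f (c - y) else 0)"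
proof -
  have "sum_list (map (\<lambda>i. if c - i = y then f i else 0) [1..<c])
        = (\<Sum>i\<in>{1..<c}. if i = c - y \<and> 1 \<le> y then f i else 0)"
    by (auto simp: sum_list_distinct_conv_sum_set intro!: sum.cong)
  also have "\<dots> = (if 1 \<le> y \<and> y < c then f (c - y) else 0)"
    by (cases "1 \<le> y") auto
  finally show ?thesis .
qed

definition cyclic_pred :: "nat \<Rightarrow> nat \<Rightarrow> nat \<Rightarrow> nat" where
  "cyclic_pred a b i = (if a \<le> i \<and> i \<le> b then (if i = a then b else i - 1) else i)"

lemma refl_pos_comp_refl_pos_Suc: "a \<le> b \<Longrightarrow> refl_pos a b \<circ> refl_pos (Suc a) b = cyclic_pred a b"
  by (auto simp: fun_eq_iff refl_pos_def in_cut_def cyclic_pred_def)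

lemma refl_pos_pred_comp_refl_pos: "a < b \<Longrightarrow> refl_pos a (b - 1) \<circ> refl_pos a b = cyclic_pred a b"
  by (auto simp: fun_eq_iff refl_pos_def in_cut_def cyclic_pred_def)

lemma bij_betw_cyclic_pred: "bij_betw (cyclic_pred a b) {a..b} {a..b}"
proof (rule bij_betw_imageI)
  show "inj_on (cyclic_pred a b) {a..b}"
    by (auto simp: inj_on_def cyclic_pred_def split: if_splits)
  show "cyclic_pred a b ` {a..b} = {a..b}"
  proof (intro equalityI subsetI)
    fix x assume x: "x \<in> {a..b}"
    show "x \<in> cyclic_pred a b ` {a..b}"
    proof (cases "x = b")
      case True
      with x show ?thesis by (auto simp: cyclic_pred_def intro!: image_eqI[of _ _ a])
    next
      case False
      with x show ?thesis by (auto simp: cyclic_pred_def intro!: image_eqI[of _ _ "Suc x"])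
    qed
  qed (auto simp: cyclic_pred_def)
qed

lemma cyclic_pred_offset:
  assumes "r < Suc b - a"
  shows "cyclic_pred a b (a + r) = a + (r + (b - a)) mod (Suc b - a)"
proof (cases r)
  case 0
  with assms show ?thesis by (simp add: cyclic_pred_def)
next
  case (Suc r')
  obtain d where b: "b = a + d"
    using assms le_Suc_ex by fastforce
  have "(r + d) mod Suc d = (r' + Suc d) mod Suc d"
    using Suc by simp
  also have "\<dots> = r'"
    using assms Suc b by (simp only: mod_add_self2) simp
  finally show ?thesis
    using assms Suc b by (simp add: cyclic_pred_def)
qed

lemma funpow_cyclic_pred:
  assumes "a \<le> i" "i \<le> b"
  shows "(cyclic_pred a b ^^ m) i = a + (i - a + m * (b - a)) mod (Suc b - a)"
proof (induction m)
  case 0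
  with assms show ?case by simp
next
  case (Suc m)
  have "(cyclic_pred a b ^^ Suc m) i
        = a + ((i - a + m * (b - a)) mod (Suc b - a) + (b - a)) mod (Suc b - a)"
    using Suc assms by (simp add: cyclic_pred_offset)
  also have "\<dots> = a + (i - a + m * (b - a) + (b - a)) mod (Suc b - a)"
    by (simp add: mod_add_left_eq)
  also have "i - a + m * (b - a) + (b - a) = i - a + Suc m * (b - a)"
    by simp
  finally show ?case .
qed

lemma funpow_cyclic_pred_period:
  assumes "(Suc b - a) dvd m"
  shows "cyclic_pred a b ^^ m = id"
proof
  fix i
  obtain k where m: "m = (Suc b - a) * k" using assms by blast
  show "(cyclic_pred a b ^^ m) i = id i"
  proof (cases "a \<le> i \<and> i \<le> b")
    case True
    have "i - a + m * (b - a) = (i - a) + (Suc b - a) * (k * (b - a))"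
      by (simp only: m mult.assoc)
    then have "(i - a + m * (b - a)) mod (Suc b - a) = (i - a) mod (Suc b - a)"
      by (simp only: mod_mult_self2)
    also have "\<dots> = i - a"
      using True by (intro mod_less) linarith
    finally have "(i - a + m * (b - a)) mod (Suc b - a) = i - a" .
    with True show ?thesis by (simp add: funpow_cyclic_pred)
  next
    case False
    have "(cyclic_pred a b ^^ j) i = i" for j
      using False by (induction j) (auto simp: cyclic_pred_def)
    then show ?thesis by simp
  qed
qed

lemma count_new_crossings_full_cut:
  "count_list (new_crossings n 1 n A) (x, y) =
     (if x = 0 \<and> 1 \<le> y \<and> y \<le> n then A (Suc n - y) 0 else 0)"
proof -
  define L where "L = concat (map (\<lambda>i. replicate (A i 0) (i, 0::nat)) [1..<Suc n])"
  have "crossing_list n 1 n A = L"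
    by (simp add: crossing_list_def outside_order_def L_def)
  then have NC: "new_crossings n 1 n A = map (Pair 0) (map (\<lambda>x. Suc n - fst x) (rev L))"
    by (simp add: new_crossings_def L_def map_snd_concat_map_replicate
        length_concat_map_replicate zip_replicate1 del: upt_Suc)
  show ?thesis
    unfolding NC count_list_map_Pair rev_map[symmetric] count_list_rev L_def
      count_list_map_concat_map_replicate
    by (simp only: fst_conv sum_list_reflected_delta) auto
qed

lemma sum_atMost_split_ends:
  fixes f :: "nat \<Rightarrow> 'a::comm_monoid_add"
  assumes "1 \<le> n"
  shows "(\<Sum>j\<le>n. f j) = f 0 + f n + sum_list (map f [1..<n])"
proof -
  have "{..n} = insert 0 (insert n {1..<n})"
    using assms by auto
  then show ?thesis
    using assms by (simp add: sum_list_distinct_conv_sum_set add.assoc)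
qed

lemma count_new_crossings_cut_butlast:
  assumes n: "2 \<le> n" and sym: "\<forall>i j. A i j = A j i" and loopfree: "\<forall>i. A i i = 0"
    and noncrossing: "\<forall>a b c d. a < c \<and> c < b \<and> b < d \<and> 0 < A a b \<longrightarrow> A c d = 0"
    and valence: "(\<Sum>j\<le>n. A 0 j) = (\<Sum>j\<le>n. A n j)"
  shows "count_list (new_crossings n 1 (n - 1) A) (x, y) =
     (if 1 \<le> y \<and> y < n
      then (if x = 0 then A (n - y) n else if x = n then A (n - y) 0 else 0) else 0)"
proof -
  define R where "R c = concat (map (\<lambda>i. replicate (A i c) (i, c)) [1..<n])" for c
  have crossings: "crossing_list n 1 (n - 1) A = R 0 @ R n"
  proof -
    have "outside_order n 1 (n - 1) = [0, n]"
      using n by (simp add: outside_order_def)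
    then have "crossing_list n 1 (n - 1) A
               = concat (map (\<lambda>i. replicate (A i 0) (i, 0) @ replicate (A i n) (i, n)) [1..<n])"
      using n by (simp add: crossing_list_def)
    also have "\<dots> = R 0 @ R n"
      unfolding R_def
    proof (rule concat_map_append_sorted)
      fix i j assume "i \<in> set [1..<n]" "j \<in> set [1..<n]" "i < j"
      then have "0 < A 0 j \<Longrightarrow> A i n = 0"
        using noncrossing[rule_format, of 0 i j n] by auto
      then show "replicate (A j 0) (j, 0) = [] \<or> replicate (A i n) (i, n) = []"
        using sym by (metis gr0I replicate_empty)
    qed simp
    finally show ?thesis .
  qed
  have row: "(\<Sum>j\<le>n. A c j) = A c 0 + A c n + sum_list (map (\<lambda>i. A i c) [1..<n])" for c
  proof -
    have "map (A c) [1..<n] = map (\<lambda>i. A i c) [1..<n]"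
      using sym by auto
    with sum_atMost_split_ends[of n "A c"] n show ?thesis
      by (simp only:)
  qed
  \<comment> \<open>Since 0 and n share the arcs between them, equal valence means equally many
     arcs from the cut region to each, so the reversal along the chord swaps the two blocks.\<close>
  have "sum_list (map (\<lambda>i. A i 0) [1..<n]) = sum_list (map (\<lambda>i. A i n) [1..<n])"
    using valence row[of 0] row[of n] loopfree sym[rule_format, of 0 n] by simp
  then obtain r where r0: "map snd (R 0) = replicate r 0" "length (R 0) = r"
    and rn: "map snd (R n) = replicate r n" "length (R n) = r"
    unfolding R_def by (simp add: map_snd_concat_map_replicate length_concat_map_replicate)
  have count_R: "count_list (map (\<lambda>x. n - fst x) (R c)) y
                 = (if 1 \<le> y \<and> y < n then A (n - y) c else 0)" for c
    unfolding R_def count_list_map_concat_map_replicate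
    by (simp only: fst_conv sum_list_reflected_delta)
  have crossings_new: "new_crossings n 1 (n - 1) A
        = map (Pair 0) (map (\<lambda>x. n - fst x) (rev (R n)))
          @ map (Pair n) (map (\<lambda>x. n - fst x) (rev (R 0)))"
    unfolding new_crossings_def Let_def crossings
    using n r0 rn by (simp add: zip_append zip_replicate1)
  show ?thesis
    unfolding crossings_new count_list_append count_list_map_Pair rev_map[symmetric] count_list_rev count_R
    using n by auto
qed

definition uniform_arc_system :: "nat \<Rightarrow> nat \<Rightarrow> (nat \<Rightarrow> nat \<Rightarrow> nat) \<Rightarrow> bool" where
  "uniform_arc_system n L A \<longleftrightarrow>
     (\<forall>i j. A i j = A j i) \<and> (\<forall>i. A i i = 0)
     \<and> (\<forall>i j. 0 < A i j \<longrightarrow> i \<le> n \<and> j \<le> n)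
     \<and> (\<forall>a b c d. a < c \<and> c < b \<and> b < d \<and> 0 < A a b \<longrightarrow> A c d = 0)
     \<and> (\<forall>i\<le>n. (\<Sum>j\<le>n. A i j) = L)"

lemma uniform_arc_system_if_arc_diagram:
  assumes D: "is_arc_diagram n l L (\<sigma>, A)" and valences: "\<forall>j\<in>{1..n}. l j = L"
  shows "uniform_arc_system n L A"
proof -
  have bij: "bij_betw \<sigma> {1..n} {1..n}"
    and rows: "\<forall>k\<in>{1..n}. (\<Sum>j\<le>n. A k j) = l (\<sigma> k)"
    and row0: "(\<Sum>j\<le>n. A 0 j) = L"
    and arcs: "(\<forall>i j. A i j = A j i) \<and> (\<forall>i. A i i = 0)
               \<and> (\<forall>i j. 0 < A i j \<longrightarrow> i \<le> n \<and> j \<le> n)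
               \<and> (\<forall>a b c d. a < c \<and> c < b \<and> b < d \<and> 0 < A a b \<longrightarrow> A c d = 0)"
    using D unfolding is_arc_diagram_def Let_def fst_conv snd_conv by blast+
  have "(\<Sum>j\<le>n. A i j) = L" if "i \<le> n" for i
  proof (cases "i = 0")
    case True
    with row0 show ?thesis by simp
  next
    case False
    with that have "i \<in> {1..n}" by simp
    moreover from bij this have "\<sigma> i \<in> {1..n}" by (rule bij_betw_apply)
    ultimately show ?thesis
      using rows valences by simp
  qed
  with arcs show ?thesis
    unfolding uniform_arc_system_def by blast
qed

lemma fst_cactus_act: "fst (cactus_act n p q (\<sigma>, A)) = \<sigma> \<circ> refl_pos p q"
  by (simp add: cactus_act_def Let_def o_def)

lemma snd_cactus_act_full_cut:
  assumes sym: "\<forall>i j. A i j = A j i" and supp: "\<forall>i j. 0 < A i j \<longrightarrow> i \<le> n \<and> j \<le> n"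
  shows "snd (cactus_act n 1 n (\<sigma>, A)) = (\<lambda>i j. A (refl_pos 1 n i) (refl_pos 1 n j))"
proof (intro ext)
  fix i j
  have "A i j = 0" if "n < i \<or> n < j" for i j
    using supp that by (meson gr0I not_le)
  then show "snd (cactus_act n 1 n (\<sigma>, A)) i j = A (refl_pos 1 n i) (refl_pos 1 n j)"
    using count_new_crossings_full_cut[of n A] sym
    by (auto simp: cactus_act_def Let_def in_cut_def refl_pos_def)
qed

lemma snd_cactus_act_cut_butlast:
  assumes "2 \<le> n" and "uniform_arc_system n L A"
  shows "snd (cactus_act n 1 (n - 1) (\<sigma>, A)) = (\<lambda>i j. A (refl_pos 0 n i) (refl_pos 0 n j))"
proof (intro ext)
  fix i j
  have sym: "\<forall>i j. A i j = A j i" and loopfree: "\<forall>i. A i i = 0"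
    and supp: "\<forall>i j. 0 < A i j \<longrightarrow> i \<le> n \<and> j \<le> n"
    and noncrossing: "\<forall>a b c d. a < c \<and> c < b \<and> b < d \<and> 0 < A a b \<longrightarrow> A c d = 0"
    and valence: "\<forall>i\<le>n. (\<Sum>j\<le>n. A i j) = L"
    using assms(2) unfolding uniform_arc_system_def by auto
  have outside: "A i j = 0" if "n < i \<or> n < j" for i j
    using supp that by (meson gr0I not_le)
  have equal_valence: "(\<Sum>j\<le>n. A 0 j) = (\<Sum>j\<le>n. A n j)"
    using valence by simp
  note crossings = count_new_crossings_cut_butlast[OF assms(1) sym loopfree noncrossing equal_valence]
  show "snd (cactus_act n 1 (n - 1) (\<sigma>, A)) i j = A (refl_pos 0 n i) (refl_pos 0 n j)"
    unfolding cactus_act_def Let_def snd_conv crossings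
    using assms(1) sym loopfree outside by (auto simp: in_cut_def refl_pos_def)
qed

lemma cactus_act_rotates:
  assumes "2 \<le> n" and "uniform_arc_system n L A"
  shows "cactus_act n 1 n (cactus_act n 1 (n - 1) (\<sigma>, A))
         = (\<sigma> \<circ> cyclic_pred 1 n, \<lambda>i j. A (cyclic_pred 0 n i) (cyclic_pred 0 n j))"
proof -
  define B where "B i j = A (refl_pos 0 n i) (refl_pos 0 n j)" for i j
  have first: "cactus_act n 1 (n - 1) (\<sigma>, A) = (\<sigma> \<circ> refl_pos 1 (n - 1), B)"
    using fst_cactus_act snd_cactus_act_cut_butlast[OF assms] unfolding B_def
    by (metis prod.collapse)
  have "\<forall>i j. B i j = B j i" and "\<forall>i j. 0 < B i j \<longrightarrow> i \<le> n \<and> j \<le> n"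
    using assms(2) unfolding B_def uniform_arc_system_def refl_pos_def in_cut_def
    by (auto split: if_splits)
  then have "snd (cactus_act n 1 n (\<sigma> \<circ> refl_pos 1 (n - 1), B))
             = (\<lambda>i j. B (refl_pos 1 n i) (refl_pos 1 n j))"
    by (rule snd_cactus_act_full_cut)
  also have "\<dots> = (\<lambda>i j. A (cyclic_pred 0 n i) (cyclic_pred 0 n j))"
    using refl_pos_comp_refl_pos_Suc[of 0 n] by (simp add: B_def fun_eq_iff)
  finally have "snd (cactus_act n 1 n (\<sigma> \<circ> refl_pos 1 (n - 1), B))
                = (\<lambda>i j. A (cyclic_pred 0 n i) (cyclic_pred 0 n j))" .
  moreover have "fst (cactus_act n 1 n (\<sigma> \<circ> refl_pos 1 (n - 1), B)) = \<sigma> \<circ> cyclic_pred 1 n"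
    using assms(1) refl_pos_pred_comp_refl_pos[of 1 n] by (simp add: fst_cactus_act comp_assoc)
  ultimately show ?thesis
    unfolding first by (metis prod.collapse)
qed

lemma sum_atMost_cyclic_pred:
  fixes f :: "nat \<Rightarrow> 'a::comm_monoid_add"
  shows "(\<Sum>j\<le>n. f (cyclic_pred 0 n j)) = (\<Sum>j\<le>n. f j)"
  using sum.reindex_bij_betw[OF bij_betw_cyclic_pred[of 0 n], of f] by (simp add: atLeast0AtMost)

lemma uniform_arc_system_rotate:
  assumes "uniform_arc_system n L A"
  shows "uniform_arc_system n L (\<lambda>i j. A (cyclic_pred 0 n i) (cyclic_pred 0 n j))"
proof -
  have sym: "\<forall>i j. A i j = A j i" and loopfree: "\<forall>i. A i i = 0"
    and supp: "\<forall>i j. 0 < A i j \<longrightarrow> i \<le> n \<and> j \<le> n"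
    and noncrossing: "\<forall>a b c d. a < c \<and> c < b \<and> b < d \<and> 0 < A a b \<longrightarrow> A c d = 0"
    and valence: "\<forall>i\<le>n. (\<Sum>j\<le>n. A i j) = L"
    using assms unfolding uniform_arc_system_def by auto
  let ?\<rho> = "cyclic_pred 0 n"
  have supp': "i \<le> n \<and> j \<le> n" if "0 < A (?\<rho> i) (?\<rho> j)" for i j
  proof -
    have "?\<rho> i \<le> n \<and> ?\<rho> j \<le> n"
      using supp[rule_format, OF that] .
    then show ?thesis
      by (auto simp: cyclic_pred_def split: if_splits)
  qed
  have "A (?\<rho> c) (?\<rho> d) = 0"
    if abcd: "a < c" "c < b" "b < d" and ab: "0 < A (?\<rho> a) (?\<rho> b)" for a b c d
  proof (rule ccontr)
    assume "A (?\<rho> c) (?\<rho> d) \<noteq> 0"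
    then have "0 < A (?\<rho> c) (?\<rho> d)" and "d \<le> n"
      using supp'[of c d] by simp_all
    have shift: "?\<rho> x = x - 1" if "0 < x" "x \<le> n" for x
      using that by (simp add: cyclic_pred_def)
    have cd: "0 < A (c - 1) (d - 1)"
      using \<open>0 < A (?\<rho> c) (?\<rho> d)\<close> abcd \<open>d \<le> n\<close> by (simp add: shift)
    show False
    proof (cases "a = 0")
      \<comment> \<open>For a = 0 the arc ends at n, beyond d - 1, so it still interleaves with c - 1 -- d - 1.\<close>
      case True
      then have "0 < A n (b - 1)"
        using ab abcd \<open>d \<le> n\<close> by (simp add: shift cyclic_pred_def)
      then have "0 < A (b - 1) n"
        using sym by simp
      moreover have "c - 1 < b - 1" "b - 1 < d - 1" "d - 1 < n"
        using abcd \<open>d \<le> n\<close> by linarith+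
      ultimately show False
        using noncrossing[rule_format, of "c - 1" "b - 1" "d - 1" n] cd by simp
    next
      case False
      then have "0 < A (a - 1) (b - 1)"
        using ab abcd \<open>d \<le> n\<close> by (simp add: shift)
      moreover have "a - 1 < c - 1" "c - 1 < b - 1" "b - 1 < d - 1"
        using abcd False by linarith+
      ultimately show False
        using noncrossing[rule_format, of "a - 1" "c - 1" "b - 1" "d - 1"] cd by simp
    qed
  qed
  moreover have "(\<Sum>j\<le>n. A (?\<rho> i) (?\<rho> j)) = L" if "i \<le> n" for i
  proof -
    have "?\<rho> i \<in> {0..n}"
      using that by (intro bij_betw_apply[OF bij_betw_cyclic_pred]) simp
    then show ?thesis
      using valence sum_atMost_cyclic_pred[of "A (?\<rho> i)" n] by simp
  qed
  moreover have "\<forall>i j. A (?\<rho> i) (?\<rho> j) = A (?\<rho> j) (?\<rho> i)" "\<forall>i. A (?\<rho> i) (?\<rho> i) = 0"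
    using sym loopfree by simp_all
  ultimately show ?thesis
    using supp' unfolding uniform_arc_system_def by blast
qed

lemma funpow_cactus_act_rotates:
  assumes "2 \<le> n" and "uniform_arc_system n L A"
  shows "((cactus_act n 1 n \<circ> cactus_act n 1 (n - 1)) ^^ m) (\<sigma>, A)
         = (\<sigma> \<circ> (cyclic_pred 1 n ^^ m),
            \<lambda>i j. A ((cyclic_pred 0 n ^^ m) i) ((cyclic_pred 0 n ^^ m) j))"
  using assms(2)
proof (induction m arbitrary: \<sigma> A)
  case 0
  then show ?case by simp
next
  case (Suc m)
  let ?\<rho> = "cyclic_pred 0 n"
  have "((cactus_act n 1 n \<circ> cactus_act n 1 (n - 1)) ^^ Suc m) (\<sigma>, A)
        = ((cactus_act n 1 n \<circ> cactus_act n 1 (n - 1)) ^^ m)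
            (\<sigma> \<circ> cyclic_pred 1 n, \<lambda>i j. A (?\<rho> i) (?\<rho> j))"
    by (simp only: funpow_Suc_right comp_apply cactus_act_rotates[OF assms(1) Suc.prems])
  also have "\<dots> = (\<sigma> \<circ> cyclic_pred 1 n \<circ> (cyclic_pred 1 n ^^ m),
                   \<lambda>i j. A (?\<rho> ((?\<rho> ^^ m) i)) (?\<rho> ((?\<rho> ^^ m) j)))"
    by (rule Suc.IH[OF uniform_arc_system_rotate[OF Suc.prems]])
  also have "\<dots> = (\<sigma> \<circ> (cyclic_pred 1 n ^^ Suc m),
                   \<lambda>i j. A ((?\<rho> ^^ Suc m) i) ((?\<rho> ^^ Suc m) j))"
    by (simp add: comp_assoc)
  finally show ?case .
qed

theorem mainTheorem16:
  fixes n linf :: nat and l :: "nat \<Rightarrow> nat"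
  assumes "3 \<le> n"
    and "\<forall>j\<in>{1..n}. l j = linf"
  shows "\<forall>D\<in>arc_diagrams n l linf.
           ((cactus_act n 1 n \<circ> cactus_act n 1 (n - 1)) ^^ (n * (n + 1))) D = D"
proof
  fix D assume "D \<in> arc_diagrams n l linf"
  moreover obtain \<sigma> A where D: "D = (\<sigma>, A)"
    by fastforce
  ultimately have uniform: "uniform_arc_system n linf A"
    using assms(2) by (simp add: arc_diagrams_def uniform_arc_system_if_arc_diagram)
  have "2 \<le> n"
    using assms(1) by simp
  have "cyclic_pred 1 n ^^ (n * (n + 1)) = id"
    by (rule funpow_cyclic_pred_period) simp
  moreover have "cyclic_pred 0 n ^^ (n * (n + 1)) = id"
    by (rule funpow_cyclic_pred_period) (metis Suc_eq_plus1 diff_zero dvd_triv_right)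
  ultimately show "((cactus_act n 1 n \<circ> cactus_act n 1 (n - 1)) ^^ (n * (n + 1))) D = D"
    unfolding D funpow_cactus_act_rotates[OF \<open>2 \<le> n\<close> uniform] by simp
qed

end
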